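(* Let $b\geq 1$ be odd, let $n,k$ be positive integers with $k\leq n-2$, and let $\mathbf{s}=s_1\ldots s_k$ be an integer sequence such that the set $\mathbf{s}\,|\,R_n(b)$ is nonempty. Let $\mathbf{t}$ be the $\prec$-last sequence in $\mathbf{s}\,|\,R_n(b)$, and let $M=\min\{b,\max\{s_i\}_{i=1}^k+1\}$. Then: (1) if $\sum_{i=1}^k s_i$ is even and $M$ is odd, then $\mathbf{t}=\mathbf{s}M0\ldots0$; (2) if $\sum_{i=1}^k s_i$ is even and $M$ is even, then $\mathbf{t}=\mathbf{s}M(M+1)0\ldots0$; (3) if $\sum_{i=1}^k s_i$ is odd, then $\mathbf{t}=\mathbf{s}0\ldots0$. (In each case the trailing zeros fill the sequence up to length $n$.)
   Context: A restricted growth function of length $n$ is an integer sequence $s_1\ldots s_n$ with $s_1=0$ and $0\leq s_{i+1}\leq \max\{s_j\}_{j=1}^i+1$ for $1\leq i\leq n-1$; $R_n$ is the set of these. For an integer $b\geq1$, $R_n(b)=\{s_1\ldots s_n\in R_n: \max_i s_i\leq b\}$. For a sequence $\mathbf{u}$ and a set $S$ of sequences, $\mathbf{u}\,|\,S$ denotes the subset of $S$ of sequences having prefix $\mathbf{u}$. The Reflected Gray Code Order $\prec$ on length-$n$ sequences of nonnegative integers: $s_1\ldots s_n\prec t_1\ldots t_n$ if, for the smallest $k$ with $s_k\neq t_k$, either $\sum_{i=1}^{k-1}s_i$ is even and $s_k<t_k$, or $\sum_{i=1}^{k-1}s_i$ is odd and $s_k>t_k$. The $\prec$-last sequence of a set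 is its largest element with respect to $\prec$. *)

theory Defs
  imports Main
begin

text \<open>Sequences s_1 ... s_n are integer lists; position i (1-based) is index i-1.\<close>

definition is_rgf :: "int list \<Rightarrow> bool" where
  "is_rgf xs \<longleftrightarrow> xs \<noteq> [] \<and> xs ! 0 = 0 \<and>
     (\<forall>i. 0 < i \<and> i < length xs \<longrightarrow> 0 \<le> xs ! i \<and> xs ! i \<le> Max (set (take i xs)) + 1)"

definition RGF :: "nat \<Rightarrow> int list set" where
  "RGF n = {xs. length xs = n \<and> is_rgf xs}"

definition RGF_b :: "nat \<Rightarrow> nat \<Rightarrow> int list set" where
  "RGF_b n b = {xs \<in> RGF n. \<forall>x \<in> set xs. x \<le> int b}"

definition prefix_restrict :: "int list \<Rightarrow> int list set \<Rightarrow> int list set" where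
  "prefix_restrict u S = {xs \<in> S. take (length u) xs = u}"

definition gray_less :: "int list \<Rightarrow> int list \<Rightarrow> bool" where
  "gray_less xs ys \<longleftrightarrow> length xs = length ys \<and>
     (\<exists>k < length xs. take k xs = take k ys \<and> xs ! k \<noteq> ys ! k \<and>
        ((even (sum_list (take k xs)) \<and> xs ! k < ys ! k) \<or>
         (odd (sum_list (take k xs)) \<and> xs ! k > ys ! k)))"

definition is_gray_last :: "int list set \<Rightarrow> int list \<Rightarrow> bool" where
  "is_gray_last S t \<longleftrightarrow> t \<in> S \<and> (\<forall>u \<in> S. u \<noteq> t \<longrightarrow> gray_less u t)"

end

theory Submission
  imports Defs
begin

text \<open>Two sequences in the prefix class s|R_n(b) first differ at some position beyond k, and
  there the Gray order prefers the larger entry if the sum so far is even and the smaller one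
  if it is odd. So the last sequence is built greedily: the maximal admissible entry after an
  even sum, 0 after an odd one. After s with odd sum this gives only zeros. After an even sum
  the next entry is M = min(b, max s + 1); if M is odd the sum turns odd and zeros follow; if M
  is even then M < b because b is odd, so M is a new maximum, M + 1 is admissible next, and
  the sum is odd afterwards.\<close>

lemma gray_less_asym:
  assumes "gray_less u c"
  shows "\<not> gray_less c u"
proof
  assume "gray_less c u"
  obtain i where i: "i < length u" "take i u = take i c" "u ! i \<noteq> c ! i"
    "(even (sum_list (take i u)) \<and> u ! i < c ! i) \<or> (odd (sum_list (take i u)) \<and> u ! i > c ! i)"
    using assms unfolding gray_less_def by blast
  obtain j where j: "j < length c" "take j c = take j u" "c ! j \<noteq> u ! j"
    "(even (sum_list (take j c)) \<and> c ! j < u ! j) \<or> (odd (sum_list (take j c)) \<and> c ! j > u ! j)"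
    using \<open>gray_less c u\<close> unfolding gray_less_def by blast
  have "\<not> i < j"
    using i(3) j(2) by (metis nth_take)
  moreover have "\<not> j < i"
    using i(2) j(3) by (metis nth_take)
  ultimately have "i = j" by simp
  then show False using i(2,4) j(4) by auto
qed

lemma is_gray_last_unique:
  assumes "is_gray_last S t" and "is_gray_last S c"
  shows "t = c"
proof (rule ccontr)
  assume "t \<noteq> c"
  with assms have "gray_less t c" and "gray_less c t"
    unfolding is_gray_last_def by auto
  then show False
    using gray_less_asym by blast
qed

lemma first_difference:
  assumes "length u = length c" and "u \<noteq> c"
  obtains j where "j < length c" "take j u = take j c" "u ! j \<noteq> c ! j"
proof -
  define P where "P i \<longleftrightarrow> i < length c \<and> u ! i \<noteq> c ! i" for i
  have "\<exists>i. P i"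
    using assms by (auto simp: P_def list_eq_iff_nth_eq)
  then have j: "P (LEAST i. P i)"
    by (rule LeastI_ex)
  have "take (LEAST i. P i) u = take (LEAST i. P i) c"
  proof (rule nth_equalityI)
    fix i assume "i < length (take (LEAST i. P i) u)"
    then have "i < (LEAST i. P i)" "i < length c"
      using assms(1) by auto
    then show "take (LEAST i. P i) u ! i = take (LEAST i. P i) c ! i"
      using not_less_Least[of i P] unfolding P_def by simp
  qed (use assms(1) in simp)
  with j that show thesis unfolding P_def by blast
qed

lemma gray_lessI:
  assumes "length u = length c" "j < length c" "take j u = take j c" "u ! j \<noteq> c ! j"
    and "if even (sum_list (take j c)) then u ! j \<le> c ! j else c ! j \<le> u ! j"
  shows "gray_less u c"
  using assms unfolding gray_less_def by (metis order_le_neq_trans order_neq_le_trans)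

lemma is_gray_last_prefix_restrictI:
  assumes c: "c \<in> prefix_restrict s S"
    and len: "\<And>u. u \<in> S \<Longrightarrow> length u = length c"
    and last_at: "\<And>u j. u \<in> prefix_restrict s S \<Longrightarrow> length s \<le> j \<Longrightarrow> j < length c \<Longrightarrow>
      take j u = take j c \<Longrightarrow>
      if even (sum_list (take j c)) then u ! j \<le> c ! j else c ! j \<le> u ! j"
  shows "is_gray_last (prefix_restrict s S) c"
  unfolding is_gray_last_def
proof (intro conjI ballI impI)
  show "c \<in> prefix_restrict s S" by (fact c)
  fix u assume u: "u \<in> prefix_restrict s S" and "u \<noteq> c"
  have lu: "length u = length c"
    using u len unfolding prefix_restrict_def by blast
  obtain j where j: "j < length c" "take j u = take j c" "u ! j \<noteq> c ! j"
    using first_difference[OF lu \<open>u \<noteq> c\<close>] .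
  have "take (length s) u = take (length s) c"
    using u c unfolding prefix_restrict_def by simp
  then have "length s \<le> j"
    using j(3) by (metis not_le nth_take)
  then show "gray_less u c"
    using gray_lessI[OF lu j] last_at[OF u _ j(1,2)] by blast
qed

lemma is_rgf_nonneg:
  assumes "is_rgf xs" and "x \<in> set xs"
  shows "0 \<le> x"
proof -
  obtain i where "i < length xs" "x = xs ! i"
    using assms(2) by (auto simp: in_set_conv_nth)
  then show ?thesis
    using assms(1) unfolding is_rgf_def by (cases "i = 0") auto
qed

lemma is_rgf_length_pos: "is_rgf xs \<Longrightarrow> 0 < length xs"
  unfolding is_rgf_def by simp

lemma is_rgf_Max_nonneg:
  assumes "is_rgf xs"
  shows "0 \<le> Max (set xs)"
proof -
  have "xs \<noteq> []" "xs ! 0 = 0"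
    using assms unfolding is_rgf_def by auto
  then have "0 \<in> set xs"
    by (metis nth_mem length_greater_0_conv)
  then show ?thesis by simp
qed

lemma is_rgf_take:
  assumes "is_rgf xs" and "0 < k"
  shows "is_rgf (take k xs)"
  using assms unfolding is_rgf_def by (auto simp: min_def)

lemma is_rgf_snoc:
  assumes "is_rgf xs" and "0 \<le> x" and "x \<le> Max (set xs) + 1"
  shows "is_rgf (xs @ [x])"
  using assms unfolding is_rgf_def
  by (auto simp: nth_append less_Suc_eq)

lemma is_rgf_append_zeros:
  assumes "is_rgf xs"
  shows "is_rgf (xs @ replicate m 0)"
proof (induction m)
  case 0
  then show ?case using assms by simp
next
  case (Suc m)
  then have "is_rgf ((xs @ replicate m 0) @ [0])"
    using is_rgf_snoc is_rgf_Max_nonneg by fastforce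
  then show ?case by (simp add: replicate_append_same[symmetric])
qed

lemma RGF_b_nth_nonneg:
  assumes "u \<in> RGF_b n b" and "j < n"
  shows "0 \<le> u ! j"
  using assms is_rgf_nonneg unfolding RGF_b_def RGF_def by auto

lemma RGF_b_nth_le:
  assumes "u \<in> RGF_b n b" and "0 < j" and "j < n"
  shows "u ! j \<le> min (int b) (Max (set (take j u)) + 1)"
  using assms unfolding RGF_b_def RGF_def is_rgf_def by auto

lemma prefix_restrict_RGF_b_prefix:
  assumes "w \<in> prefix_restrict s (RGF_b n b)" and "s \<noteq> []"
  shows "is_rgf s" and "\<forall>x\<in>set s. x \<le> int b"
proof -
  have w: "take (length s) w = s" "is_rgf w" "\<forall>x\<in>set w. x \<le> int b"
    using assms(1) unfolding prefix_restrict_def RGF_b_def RGF_def by auto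
  show "is_rgf s"
    using is_rgf_take[OF w(2)] assms(2) w(1) by force
  show "\<forall>x\<in>set s. x \<le> int b"
    using w(1,3) set_take_subset by (metis subsetD)
qed

lemma prefix_restrict_RGF_b_appendI:
  assumes "is_rgf (s @ r)" and "\<forall>x\<in>set (s @ r). x \<le> int b" and "length (s @ r) = n"
  shows "s @ r \<in> prefix_restrict s (RGF_b n b)"
  using assms unfolding prefix_restrict_def RGF_b_def RGF_def by simp

lemma length_RGF_b: "u \<in> RGF_b n b \<Longrightarrow> length u = n"
  unfolding RGF_b_def RGF_def by simp

lemma prefix_restrict_RGF_b_nth_bounds:
  assumes u: "u \<in> prefix_restrict s (RGF_b n b)" and "is_rgf s"
    and "length s \<le> j" and "j < n"
  shows "0 \<le> u ! j" and "u ! j \<le> min (int b) (Max (set (take j u)) + 1)"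
proof -
  have "u \<in> RGF_b n b"
    using u by (simp add: prefix_restrict_def)
  moreover have "0 < j"
    using is_rgf_length_pos[OF assms(2)] assms(3) by linarith
  ultimately show "0 \<le> u ! j" and "u ! j \<le> min (int b) (Max (set (take j u)) + 1)"
    using RGF_b_nth_nonneg RGF_b_nth_le assms(4) by blast+
qed

lemma is_gray_last_odd_prefix:
  assumes "is_rgf s" and "\<forall>x\<in>set s. x \<le> int b" and "length s \<le> n"
    and "odd (sum_list s)"
  shows "is_gray_last (prefix_restrict s (RGF_b n b)) (s @ replicate (n - length s) 0)"
    (is "is_gray_last ?S ?c")
proof (rule is_gray_last_prefix_restrictI)
  show "?c \<in> ?S"
    using assms by (intro prefix_restrict_RGF_b_appendI is_rgf_append_zeros) auto
  show "length u = length ?c" if "u \<in> RGF_b n b" for u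
    using that assms(3) by (simp add: length_RGF_b)
  fix u j assume u: "u \<in> ?S" and j: "length s \<le> j" "j < length ?c"
  have "sum_list (take j ?c) = sum_list s" and "?c ! j = 0"
    using j by (simp_all add: nth_append sum_list_replicate)
  moreover have "0 \<le> u ! j"
    using prefix_restrict_RGF_b_nth_bounds(1)[OF u assms(1) j(1)] j(2) assms(3) by simp
  ultimately show "if even (sum_list (take j ?c)) then u ! j \<le> ?c ! j else ?c ! j \<le> u ! j"
    using assms(4) by simp
qed

lemma is_gray_last_even_prefix_odd_max:
  assumes "is_rgf s" and "\<forall>x\<in>set s. x \<le> int b" and "length s < n"
    and "even (sum_list s)" and M: "M = min (int b) (Max (set s) + 1)" and "odd M"
  shows "is_gray_last (prefix_restrict s (RGF_b n b)) (s @ M # replicate (n - length s - 1) 0)"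
    (is "is_gray_last ?S ?c")
proof (rule is_gray_last_prefix_restrictI)
  have "is_rgf ((s @ [M]) @ replicate (n - length s - 1) 0)"
    using assms is_rgf_Max_nonneg by (intro is_rgf_append_zeros is_rgf_snoc) auto
  then show "?c \<in> ?S"
    using assms by (intro prefix_restrict_RGF_b_appendI) auto
  show "length u = length ?c" if "u \<in> RGF_b n b" for u
    using that assms(3) by (simp add: length_RGF_b)
  fix u j assume u: "u \<in> ?S" and j: "length s \<le> j" "j < length ?c"
    and agree: "take j u = take j ?c"
  have "j < n"
    using j(2) assms(3) by simp
  note bounds = prefix_restrict_RGF_b_nth_bounds[OF u assms(1) j(1) this, unfolded agree]
  show "if even (sum_list (take j ?c)) then u ! j \<le> ?c ! j else ?c ! j \<le> u ! j"
  proof (cases "j = length s")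
    case True
    then show ?thesis
      using bounds(2) assms(4) M by simp
  next
    case False
    then obtain m where m: "j = Suc (length s) + m"
      using j(1) by (metis le_Suc_ex le_neq_implies_less Suc_le_eq le_less)
    show ?thesis
      using bounds(1) m j(2) assms(4,6) by (simp add: nth_append sum_list_replicate)
  qed
qed

lemma is_gray_last_even_prefix_even_max:
  assumes "is_rgf s" and "\<forall>x\<in>set s. x \<le> int b" and "length s + 1 < n"
    and "even (sum_list s)" and M: "M = Max (set s) + 1" and "M < int b" and "even M"
  shows "is_gray_last (prefix_restrict s (RGF_b n b))
    (s @ [M, M + 1] @ replicate (n - length s - 2) 0)"
    (is "is_gray_last ?S ?c")
proof (rule is_gray_last_prefix_restrictI)
  have "s \<noteq> []"
    using assms(1) unfolding is_rgf_def by blast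
  then have Max_sM: "Max (set (s @ [M])) = M"
    using M by (simp add: max_def)
  have "is_rgf (((s @ [M]) @ [M + 1]) @ replicate (n - length s - 2) 0)"
    using assms is_rgf_Max_nonneg Max_sM
    by (intro is_rgf_append_zeros is_rgf_snoc) auto
  then show "?c \<in> ?S"
    using assms by (intro prefix_restrict_RGF_b_appendI) auto
  show "length u = length ?c" if "u \<in> RGF_b n b" for u
    using that assms(3) by (simp add: length_RGF_b)
  fix u j assume u: "u \<in> ?S" and j: "length s \<le> j" "j < length ?c"
    and agree: "take j u = take j ?c"
  have "j < n"
    using j(2) assms(3) by simp
  note bounds = prefix_restrict_RGF_b_nth_bounds[OF u assms(1) j(1) this, unfolded agree]
  consider "j = length s" | "j = Suc (length s)" | m where "j = Suc (Suc (length s)) + m"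
    using j(1) by (metis add_Suc le_Suc_ex le_antisym not_less_eq_eq plus_nat.add_0 add_Suc_right)
  then show "if even (sum_list (take j ?c)) then u ! j \<le> ?c ! j else ?c ! j \<le> u ! j"
  proof cases
    case 1
    then show ?thesis
      using bounds(2) assms(4) M by simp
  next
    case 2
    then have "take j ?c = s @ [M]"
      by simp
    then show ?thesis
      using 2 bounds(2) Max_sM assms(4,7) by (simp add: nth_append)
  next
    case 3
    show ?thesis
      using bounds(1) 3 j(2) assms(4) by (simp add: nth_append sum_list_replicate)
  qed
qed

theorem proposition1:
  fixes b n k :: nat and s t :: "int list"
  assumes "b \<ge> 1" and "odd b"
    and "n > 0" and "k > 0" and "k \<le> n - 2"
    and "length s = k"
    and "prefix_restrict s (RGF_b n b) \<noteq> {}"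
    and "is_gray_last (prefix_restrict s (RGF_b n b)) t"
  defines "M \<equiv> min (int b) (Max (set s) + 1)"
  shows "(even (sum_list s) \<and> odd M \<longrightarrow> t = s @ [M] @ replicate (n - k - 1) 0)
       \<and> (even (sum_list s) \<and> even M \<longrightarrow> t = s @ [M, M + 1] @ replicate (n - k - 2) 0)
       \<and> (odd (sum_list s) \<longrightarrow> t = s @ replicate (n - k) 0)"
proof -
  obtain w where "w \<in> prefix_restrict s (RGF_b n b)"
    using assms(7) by blast
  moreover have "s \<noteq> []"
    using assms(4,6) by auto
  ultimately have s: "is_rgf s" "\<forall>x\<in>set s. x \<le> int b"
    using prefix_restrict_RGF_b_prefix by blast+
  have n: "length s + 1 < n"
    using assms(4-6) by linarith
  have M: "M = min (int b) (Max (set s) + 1)"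
    by (simp add: M_def)
  have last: "t = c" if "is_gray_last (prefix_restrict s (RGF_b n b)) c" for c
    using is_gray_last_unique[OF assms(8) that] .
  show ?thesis
  proof (intro conjI impI)
    assume "even (sum_list s) \<and> odd M"
    then show "t = s @ [M] @ replicate (n - k - 1) 0"
      using last[OF is_gray_last_even_prefix_odd_max[OF s _ _ M]] n assms(6) by simp
  next
    assume even: "even (sum_list s) \<and> even M"
    then have "M \<noteq> int b"
      using assms(2) by auto
    then have "M < int b" and "M = Max (set s) + 1"
      using M by auto
    then show "t = s @ [M, M + 1] @ replicate (n - k - 2) 0"
      using last[OF is_gray_last_even_prefix_even_max[OF s n]] even assms(6) by simp
  next
    assume "odd (sum_list s)"
    then show "t = s @ replicate (n - k) 0"
      using last[OF is_gray_last_odd_prefix[OF s]] n assms(6) by simp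
  qed
qed

end
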